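(* Let $n\ge2$, $N\ge2n+1$, $\alpha_2,\dots,\alpha_n$ real, $\alpha_1=1$. Consider the open ($k=-1$) $N$-dimensional metric $ds^2=-dt^2+a(t)^2\left(\frac{dr^2}{1+r^2}+r^2d\Omega_{N-2}^2\right)$ and the pressure ($p$) component of the Lovelock field equations with $p=0$, namely $$-(N-2)\left(\frac{N-3}{2}\Big(\frac{\dot a^2}{a^2}-\frac{1}{a^2}\Big)+\frac{\ddot a}{a}\right)+\sum_{i=2}^{n}\alpha_i\left[{}^{(i)}k_{11}\Big(\frac{\dot a^2}{a^2}-\frac{1}{a^2}\Big)^i+{}^{(i)}k_{12}\,\frac{\ddot a}{a}\Big(\frac{\dot a^2}{a^2}-\frac{1}{a^2}\Big)^{i-1}\right]=0 .$$ Let $C_1$ be a real root of $2-N+\sum_{i=2}^n\alpha_i\,{}^{(i)}k_{12}\,\frac{C_1^{i-1}}{i}=0$ (equivalently a nonzero root of $\sum_{i=1}^n\alpha_i\,{}^{(i)}k_{12}\,C_1^i/i=0$, with ${}^{(1)}k_{12}=-(N-2)$). Then $$a(t)=\frac{1}{\sqrt{C_1}}\sinh\big(\sqrt{C_1}\,t\big)=\sum_{j\ge0}\frac{C_1^{\,j}\,t^{2j+1}}{(2j+1)!}$$ is a solution of this pressure-free equation with $a(0)=0$.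
   Context: Dots denote $d/dt$ ($t$ cosmic time). This equation is the spatial ($p$) component of the Lovelock field equations $\sum_i\alpha_i\,{}^{(i)}\mathcal{H}^a_{\ b}=T^a_{\ b}$ for a perfect fluid in the FRW metric. Coefficients (binomial coefficients $\binom{a}{b}$, zero when $b<0$): ${}^{(i)}k_{11}=-\tfrac12(2(i-1))!\,(N-2)(N-1-2i)\binom{N-3}{2(i-1)}$, ${}^{(i)}k_{12}=-\tfrac12(2(i-1))!\left[2(N-i-1)\binom{N-2}{2(i-1)}+(N-2)(N-1-2i)\binom{N-3}{2i-3}\right]$. *)

theory Defs
  imports "HOL-Analysis.Analysis"
begin

definition binom_z :: "nat \<Rightarrow> int \<Rightarrow> real" where
  "binom_z a b = (if b < 0 then 0 else real (a choose nat b))"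

definition k11 :: "nat \<Rightarrow> nat \<Rightarrow> real" where
  "k11 N i = - (1/2) * fact (2 * (i - 1)) * (real N - 2) * (real N - 1 - 2 * real i)
              * binom_z (N - 3) (2 * (int i - 1))"

definition k12 :: "nat \<Rightarrow> nat \<Rightarrow> real" where
  "k12 N i = - (1/2) * fact (2 * (i - 1)) *
     (2 * (real N - real i - 1) * binom_z (N - 2) (2 * (int i - 1))
      + (real N - 2) * (real N - 1 - 2 * real i) * binom_z (N - 3) (2 * int i - 3))"

text \<open>Pressure component of the Lovelock equations (p = 0), open FRW, evaluated at
  a = a(t), a' = da/dt, a'' = d^2a/dt^2.\<close>
definition lovelock_p_lhs ::
  "nat \<Rightarrow> nat \<Rightarrow> (nat \<Rightarrow> real) \<Rightarrow> real \<Rightarrow> real \<Rightarrow> real \<Rightarrow> real" where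
  "lovelock_p_lhs N n \<alpha> a a' a'' =
     (let H = a'^2 / a^2 - 1 / a^2; Q = a'' / a in
      - (real N - 2) * ((real N - 3) / 2 * H + Q)
      + (\<Sum>i=2..n. \<alpha> i * (k11 N i * H ^ i + k12 N i * Q * H ^ (i - 1))))"

text \<open>Power series form of sinh(sqrt C t)/sqrt C (valid for every real C).\<close>
definition sinh_sol :: "real \<Rightarrow> real \<Rightarrow> real" where
  "sinh_sol C t = (\<Sum>j. C ^ j * t ^ (2 * j + 1) / fact (2 * j + 1))"

end

theory Submission imports Defs begin

text \<open>The function \<open>a = sinh(\<surd>C t)/\<surd>C\<close>, given by its power series for every real \<open>C\<close>,
  solves \<open>a'' = C a\<close> with \<open>a(0) = 0\<close>, \<open>a'(0) = 1\<close>, hence \<open>a'\<^sup>2 - C a\<^sup>2 = 1\<close>. Thus both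
  curvature quantities \<open>H = (a'\<^sup>2 - 1)/a\<^sup>2\<close> and \<open>Q = a''/a\<close> of the field equation equal \<open>C\<close>.
  The binomial identity \<open>2i (k11 + k12) = (N - 1) k12\<close> then collapses every Lovelock term, and
  the equation becomes \<open>(N - 1) C / 2\<close> times the polynomial of which \<open>C\<close> is a root.\<close>

lemma Suc_times_binomial_Suc:
  "real (Suc k) * real (n choose Suc k) = (real n - real k) * real (n choose k)"
proof -
  have "real (Suc n) * real (n choose k) = real (Suc n choose Suc k) * real (Suc k)"
    by (metis Suc_times_binomial_eq of_nat_mult)
  then show ?thesis by (simp add: algebra_simps)
qed

lemma k11_add_k12:
  assumes "2 \<le> i" "3 \<le> N"
  shows "2 * real i * (k11 N i + k12 N i) = (real N - 1) * k12 N i"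
proof -
  obtain j where i: "i = j + 2" using assms(1) by (metis add.commute le_Suc_ex)
  obtain m where N: "N = m + 3" using assms(2) by (metis add.commute le_Suc_ex)
  define A where "A = real (m choose (2*j+1))"
  define B where "B = real (m choose (2*j+2))"
  have index1: "nat (2 * (int i - 1)) = 2 * j + 2" and index2: "nat (2 * int i - 3) = 2 * j + 1"
    using i by simp_all
  have binom_N3_i1: "binom_z (N - 3) (2 * (int i - 1)) = B"
    unfolding binom_z_def B_def index1 using i N by simp
  have binom_N2_i1: "binom_z (N - 2) (2 * (int i - 1)) = A + B"
    unfolding binom_z_def A_def B_def index1 using i N by (simp add: numeral_3_eq_3)
  have binom_N3_i2: "binom_z (N - 3) (2 * int i - 3) = A"
    unfolding binom_z_def A_def index2 using i N by simp
  have ratio: "(2 * real j + 2) * B = (real m - 2 * real j - 1) * A"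
    using Suc_times_binomial_Suc[of "2*j+1" m] unfolding A_def B_def by (simp add: algebra_simps)
  have "real N = real m + 3" and "real i = real j + 2"
    using i N by simp_all
  then show ?thesis
    unfolding k11_def k12_def binom_N3_i1 binom_N2_i1 binom_N3_i2
    using ratio by algebra
qed

lemma lovelock_p_lhs_constant_curvature:
  fixes a a' a'' C :: real
  assumes "3 \<le> N" and "a \<noteq> 0" and energy: "a' ^ 2 - C * a ^ 2 = 1" and "a'' = C * a"
  shows "lovelock_p_lhs N n \<alpha> a a' a'' =
    (real N - 1) / 2 * C * (2 - real N + (\<Sum>i=2..n. \<alpha> i * k12 N i * C ^ (i - 1) / real i))"
proof -
  have H: "a' ^ 2 / a ^ 2 - 1 / a ^ 2 = C" and Q: "a'' / a = C"
    using assms(2-) by (simp_all add: field_simps)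
  have lovelock_term: "\<alpha> i * (k11 N i * C ^ i + k12 N i * C * C ^ (i - 1))
      = (real N - 1) / 2 * C * (\<alpha> i * k12 N i * C ^ (i - 1) / real i)" if "i \<in> {2..n}" for i
  proof -
    have i: "2 \<le> i" using that by simp
    have "C ^ i = C * C ^ (i - 1)" using i by (simp add: power_eq_if)
    then have "\<alpha> i * (k11 N i * C ^ i + k12 N i * C * C ^ (i - 1))
        = \<alpha> i * C * C ^ (i - 1) * (2 * real i * (k11 N i + k12 N i)) / (2 * real i)"
      using i by (simp add: field_simps)
    then show ?thesis
      unfolding k11_add_k12[OF i assms(1)] by simp
  qed
  have "lovelock_p_lhs N n \<alpha> a a' a'' = - (real N - 2) * ((real N - 3) / 2 * C + C)
      + (\<Sum>i=2..n. \<alpha> i * (k11 N i * C ^ i + k12 N i * C * C ^ (i - 1)))"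
    unfolding lovelock_p_lhs_def Let_def H Q by (simp add: mult.assoc)
  also have "\<dots> = - (real N - 2) * ((real N - 3) / 2 * C + C)
      + (real N - 1) / 2 * C * (\<Sum>i=2..n. \<alpha> i * k12 N i * C ^ (i - 1) / real i)"
    by (simp only: sum.cong[OF refl lovelock_term] sum_distrib_left)
  also have "\<dots> = (real N - 1) / 2 * C
      * (2 - real N + (\<Sum>i=2..n. \<alpha> i * k12 N i * C ^ (i - 1) / real i))"
    by (simp add: field_simps)
  finally show ?thesis .
qed

lemma ode_second_order_first_integral:
  fixes f f' :: "real \<Rightarrow> real"
  assumes "\<And>t. (f has_real_derivative f' t) (at t)"
    and "\<And>t. (f' has_real_derivative C * f t) (at t)"
  shows "f' t ^ 2 - C * f t ^ 2 = f' 0 ^ 2 - C * f 0 ^ 2"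
proof (rule DERIV_isconst_all[of "\<lambda>t. f' t ^ 2 - C * f t ^ 2", rule_format])
  fix x
  show "((\<lambda>t. f' t ^ 2 - C * f t ^ 2) has_real_derivative 0) (at x)"
    using assms[of x] by (auto intro!: derivative_eq_intros)
qed

definition sinh_coeff :: "real \<Rightarrow> nat \<Rightarrow> real" where
  "sinh_coeff C n = (if even n then 0 else C ^ (n div 2) / fact n)"

lemma summable_sinh_coeff: "summable (\<lambda>n. sinh_coeff C n * t ^ n)"
proof (rule summable_comparison_test)
  show "summable (\<lambda>n. inverse (fact n) * ((1 + \<bar>C\<bar>) * \<bar>t\<bar>) ^ n)"
    by (rule summable_exp)
  have "norm (sinh_coeff C n * t ^ n) \<le> inverse (fact n) * ((1 + \<bar>C\<bar>) * \<bar>t\<bar>) ^ n" for n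
  proof (cases "even n")
    case False
    have "\<bar>C\<bar> ^ (n div 2) \<le> (1 + \<bar>C\<bar>) ^ (n div 2)"
      by (rule power_mono) auto
    also have "\<dots> \<le> (1 + \<bar>C\<bar>) ^ n"
      by (rule power_increasing) auto
    finally have "inverse (fact n) * (\<bar>C\<bar> ^ (n div 2) * \<bar>t\<bar> ^ n)
        \<le> inverse (fact n) * ((1 + \<bar>C\<bar>) ^ n * \<bar>t\<bar> ^ n)"
      by (intro mult_left_mono mult_right_mono) auto
    with False show ?thesis
      by (simp add: sinh_coeff_def abs_mult power_abs power_mult_distrib divide_inverse mult_ac)
  qed (simp add: sinh_coeff_def)
  then show "\<exists>M. \<forall>n\<ge>M. norm (sinh_coeff C n * t ^ n)
      \<le> inverse (fact n) * ((1 + \<bar>C\<bar>) * \<bar>t\<bar>) ^ n"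
    by blast
qed

lemma sinh_sol_power_series: "sinh_sol C = (\<lambda>t. \<Sum>n. sinh_coeff C n * t ^ n)"
proof
  fix t
  have "strict_mono (\<lambda>j::nat. 2 * j + 1)" by (rule strict_monoI) auto
  moreover have "sinh_coeff C n * t ^ n = 0" if "n \<notin> range (\<lambda>j. 2 * j + 1)" for n
  proof -
    from that have "even n" by (metis oddE rangeI)
    then show ?thesis by (simp add: sinh_coeff_def)
  qed
  ultimately have "(\<lambda>j. sinh_coeff C (2 * j + 1) * t ^ (2 * j + 1))
      sums (\<Sum>n. sinh_coeff C n * t ^ n)"
    using sums_mono_reindex[of "\<lambda>j. 2 * j + 1" "\<lambda>n. sinh_coeff C n * t ^ n"]
      summable_sums[OF summable_sinh_coeff] by blast
  moreover have "(\<lambda>j. sinh_coeff C (2 * j + 1) * t ^ (2 * j + 1))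
      = (\<lambda>j. C ^ j * t ^ (2 * j + 1) / fact (2 * j + 1))"
    by (simp add: sinh_coeff_def)
  ultimately show "sinh_sol C t = (\<Sum>n. sinh_coeff C n * t ^ n)"
    unfolding sinh_sol_def by (simp add: sums_iff)
qed

lemma diffs_diffs_sinh_coeff: "diffs (diffs (sinh_coeff C)) = (\<lambda>n. C * sinh_coeff C n)"
proof
  fix n
  show "diffs (diffs (sinh_coeff C)) n = C * sinh_coeff C n"
  proof (cases "even n")
    case False
    have "fact (Suc (Suc n)) = real (Suc (Suc n)) * real (Suc n) * (fact n :: real)"
      by simp
    moreover have "Suc (Suc n) div 2 = Suc (n div 2)" by simp
    ultimately show ?thesis
      using False by (simp add: diffs_def sinh_coeff_def field_simps del: of_nat_Suc fact_Suc)
  qed (simp add: diffs_def sinh_coeff_def)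
qed

lemma sinh_sol_at_0 [simp]: "sinh_sol C 0 = 0"
  by (simp add: sinh_sol_def)

lemma sinh_sol_ode:
  obtains a' where "\<And>t. (sinh_sol C has_real_derivative a' t) (at t)"
    and "\<And>t. (a' has_real_derivative C * sinh_sol C t) (at t)" and "a' 0 = 1"
proof
  let ?a' = "\<lambda>t. \<Sum>n. diffs (sinh_coeff C) n * t ^ n"
  show "(sinh_sol C has_real_derivative ?a' t) (at t)" for t
    unfolding sinh_sol_power_series
    by (rule termdiffs_strong_converges_everywhere) (rule summable_sinh_coeff)
  have "(?a' has_real_derivative (\<Sum>n. C * sinh_coeff C n * t ^ n)) (at t)" for t
    using termdiffs_strong_converges_everywhere[OF termdiff_converges_all[OF summable_sinh_coeff]]
    by (simp add: diffs_diffs_sinh_coeff)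
  then show "(?a' has_real_derivative C * sinh_sol C t) (at t)" for t
    by (simp add: sinh_sol_power_series suminf_mult[OF summable_sinh_coeff] mult.assoc)
  show "?a' 0 = 1"
    by (simp add: diffs_def sinh_coeff_def)
qed

theorem mainTheorem4:
  fixes N n :: nat and \<alpha> :: "nat \<Rightarrow> real" and C1 :: real
  assumes "n \<ge> 2" and "N \<ge> 2 * n + 1" and "\<alpha> 1 = 1"
    and "2 - real N + (\<Sum>i=2..n. \<alpha> i * k12 N i * C1 ^ (i - 1) / real i) = 0"
  shows "sinh_sol C1 0 = 0 \<and>
    (\<exists>a' a''. (\<forall>t. (sinh_sol C1 has_real_derivative a' t) (at t)) \<and>
              (\<forall>t. (a' has_real_derivative a'' t) (at t)) \<and>
              (\<forall>t. sinh_sol C1 t \<noteq> 0 \<longrightarrow>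
                   lovelock_p_lhs N n \<alpha> (sinh_sol C1 t) (a' t) (a'' t) = 0))"
proof -
  obtain a' where da: "\<And>t. (sinh_sol C1 has_real_derivative a' t) (at t)"
    and da': "\<And>t. (a' has_real_derivative C1 * sinh_sol C1 t) (at t)" and "a' 0 = 1"
    using sinh_sol_ode[of C1] by blast
  then have energy: "a' t ^ 2 - C1 * sinh_sol C1 t ^ 2 = 1" for t
    using ode_second_order_first_integral[OF da da'] by simp
  have "lovelock_p_lhs N n \<alpha> (sinh_sol C1 t) (a' t) (C1 * sinh_sol C1 t) = 0"
    if "sinh_sol C1 t \<noteq> 0" for t
    using lovelock_p_lhs_constant_curvature[where N = N and n = n and \<alpha> = \<alpha>, OF _ that energy refl]
      assms(1,2,4) by simp
  then show ?thesis
    using da da'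
    by (intro conjI sinh_sol_at_0 exI[where x = a'] exI[where x = "\<lambda>t. C1 * sinh_sol C1 t"]) auto
qed

end
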